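(* Consider the following sequence of multiple testing problems indexed by the dimension $n$. Let $f(\cdot\mid\theta)$, $\theta\in\mathbb{R}$, be a parametric family of densities, let $\theta_0\neq\theta_1$, and let $m\ge1$ be an integer. There is an unknown support set $\mathcal{S}=\mathcal{S}(n)\subseteq\{1,\dots,n\}$ with $s=|\mathcal{S}|$. Run the following sequential thresholding procedure with $K$ passes. Set $\mathcal{S}_0=\{1,\dots,n\}$ and $\gamma_0=\mathrm{median}(T_{i,m}\mid\theta_0)$, the median of the distribution of $T_{i,m}=\sum_{j=1}^m\log\frac{f(y_{i,j}\mid\theta_1)}{f(y_{i,j}\mid\theta_0)}$ when the $y_{i,j}$ are i.i.d. $f(\cdot\mid\theta_0)$. For $k=1,\dots,K$: for each $i\in\mathcal{S}_{k-1}$ draw fresh observations $y^{(k)}_{i,1},\dots,y^{(k)}_{i,m}$, independent of everything else, i.i.d. $f(\cdot\mid\theta_0)$ if $i\notin\mathcal{S}$ and i.i.d. $f(\cdot\mid\theta_1)$ if $i\in\mathcal{S}$, compute $T^{(k)}_{i,m}=\sum_{j=1}^m\log\frac{f(y^{(k)}_{i,j}\mid\theta_1)}{f(y^{(k)}_{i,j}\mid\theta_0)}$, and set $\mathcal{S}_k=\{i\in\mathcal{S}_{k-1}: T^{(k)}_{i,m}>\gamma_0\}$. The output is $\mathcal{S}_K$. (For the purpose of the condition below, $T^{(k)}_{i,m}$ is regarded as defined for all $i\in\mathcal{S}$ and all $k\le K$.) Suppose that $$\lim_{n\to\infty}\mathbb{P}\Big(\min_{1\le k\le K}\ \min_{i\in\mathcal{S}}T^{(k)}_{i,m}\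 \le\ \mathrm{median}(T_{i,m}\mid\theta_0)\Big)=0$$ and $K=(1+\epsilon)\log_2 n$ for some $\epsilon>0$. Then sequential thresholding is reliable: with $\mathcal{E}_\epsilon=\{\mathcal{S}_K\neq\mathcal{S}\}$, $\lim_{n\to\infty}\mathbb{P}(\mathcal{E}_\epsilon)=0$.
   Context: A support estimator $\widehat{\mathcal{S}}(n)$ is called reliable if $\lim_{n\to\infty}\mathbb{P}(\widehat{\mathcal{S}}(n)\neq\mathcal{S}(n))=0$. The quantities $s$, $\theta_0,\theta_1$ may depend on $n$. *)

theory Defs
  imports "HOL-Probability.Probability"
begin

definition obs_dist :: "(real \<Rightarrow> real \<Rightarrow> real) \<Rightarrow> real \<Rightarrow> real measure" where
  "obs_dist f \<theta> = density lborel (\<lambda>y. ennreal (f \<theta> y))"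

definition llr_stat :: "(real \<Rightarrow> real \<Rightarrow> real) \<Rightarrow> real \<Rightarrow> real \<Rightarrow> nat \<Rightarrow> (nat \<Rightarrow> real) \<Rightarrow> real" where
  "llr_stat f \<theta>0 \<theta>1 m ys = (\<Sum>j<m. ln (f \<theta>1 (ys j) / f \<theta>0 (ys j)))"

definition is_median :: "'a measure \<Rightarrow> ('a \<Rightarrow> real) \<Rightarrow> real \<Rightarrow> bool" where
  "is_median M X \<gamma> \<longleftrightarrow>
     measure M {x \<in> space M. X x \<le> \<gamma>} \<ge> 1/2 \<and> measure M {x \<in> space M. X x \<ge> \<gamma>} \<ge> 1/2"

fun surv :: "nat \<Rightarrow> (nat \<Rightarrow> nat \<Rightarrow> real) \<Rightarrow> real \<Rightarrow> nat \<Rightarrow> nat set" where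
  "surv n T \<gamma> 0 = {1..n}"
| "surv n T \<gamma> (Suc k) = {i \<in> surv n T \<gamma> k. T (Suc k) i > \<gamma>}"

end

theory Submission
  imports Defs
begin

text \<open>A null coordinate survives a pass with probability at most 1/2, because the threshold is a
  median of its statistic; the passes use fresh independent samples, so it survives all K passes
  with probability at most 2^{-K}, and a union bound over at most n null coordinates gives
  n 2^{-K} \<le> n^{-\<epsilon>}.  The only other way the output can differ from the support is that some
  signal coordinate falls below the threshold in some pass, which the signal condition makes unlikely.\<close>

lemma (in prob_space) indep_vars_reindex:
  assumes ind: "indep_vars M' X I" and inj: "inj_on h J" and sub: "h ` J \<subseteq> I"
  shows "indep_vars (\<lambda>j. M' (h j)) (\<lambda>j. X (h j)) J"
proof -
  have "indep_vars (\<lambda>j. PiM {h j} M') (\<lambda>j \<omega>. restrict (\<lambda>i. X i \<omega>) {h j}) J"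
    using sub inj by (intro indep_vars_restrict[OF ind]) (auto simp: disjoint_family_on_def inj_on_def)
  then have "indep_vars (\<lambda>j. M' (h j)) (\<lambda>j \<omega>. restrict (\<lambda>i. X i \<omega>) {h j} (h j)) J"
    by (rule indep_vars_compose2) (rule measurable_component_singleton, simp)
  then show ?thesis by simp
qed

lemma (in prob_space) indep_vars_block_stat:
  fixes X :: "'i \<Rightarrow> 'a \<Rightarrow> real" and g :: "('j \<Rightarrow> real) \<Rightarrow> real"
  assumes ind: "indep_vars (\<lambda>_. borel) X I"
    and inj: "inj_on (\<lambda>(k, j). h k j) (L \<times> J)" and sub: "(\<lambda>(k, j). h k j) ` (L \<times> J) \<subseteq> I"
    and g: "g \<in> borel_measurable (PiM J (\<lambda>_. borel))"
    and g_local: "\<And>x y. (\<And>j. j \<in> J \<Longrightarrow> x j = y j) \<Longrightarrow> g x = g y"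
  shows "indep_vars (\<lambda>_. borel) (\<lambda>k \<omega>. g (\<lambda>j. X (h k j) \<omega>)) L"
proof -
  have "indep_vars (\<lambda>k. PiM (h k ` J) (\<lambda>_. borel)) (\<lambda>k \<omega>. restrict (\<lambda>i. X i \<omega>) (h k ` J)) L"
    using sub inj by (intro indep_vars_restrict[OF ind]) (auto simp: disjoint_family_on_def inj_on_def)
  then have "indep_vars (\<lambda>_. borel) (\<lambda>k \<omega>. g (\<lambda>j\<in>J. restrict (\<lambda>i. X i \<omega>) (h k ` J) (h k j))) L"
  proof (rule indep_vars_compose2)
    fix k
    have "(\<lambda>x. \<lambda>j\<in>J. x (h k j)) \<in> measurable (PiM (h k ` J) (\<lambda>_. borel)) (PiM J (\<lambda>_. borel))"
      by (intro measurable_restrict measurable_component_singleton) auto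
    from measurable_comp[OF this g]
    show "(\<lambda>x. g (\<lambda>j\<in>J. x (h k j))) \<in> borel_measurable (PiM (h k ` J) (\<lambda>_. borel))"
      by (simp add: comp_def)
  qed
  moreover have "g (\<lambda>j\<in>J. restrict (\<lambda>i. X i \<omega>) (h k ` J) (h k j)) = g (\<lambda>j. X (h k j) \<omega>)" for k \<omega>
    by (rule g_local) simp
  ultimately show ?thesis by simp
qed

lemma (in prob_space) prob_iid_stat_gt_median_le_half:
  fixes X :: "'j \<Rightarrow> 'a \<Rightarrow> real" and g :: "('j \<Rightarrow> real) \<Rightarrow> real"
  assumes ind: "indep_vars (\<lambda>_. borel) X J" and J: "J \<noteq> {}"
    and distr_X: "\<And>j. j \<in> J \<Longrightarrow> distr M borel (X j) = P"
    and P: "prob_space P" "sets P = sets borel"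
    and g: "g \<in> borel_measurable (PiM J (\<lambda>_. borel))"
    and g_local: "\<And>x y. (\<And>j. j \<in> J \<Longrightarrow> x j = y j) \<Longrightarrow> g x = g y"
    and median: "measure (PiM J (\<lambda>_. P)) {x \<in> space (PiM J (\<lambda>_. P)). g x \<le> \<gamma>} \<ge> 1/2"
  shows "prob {\<omega> \<in> space M. g (\<lambda>j. X j \<omega>) > \<gamma>} \<le> 1/2"
proof -
  let ?Q = "PiM J (\<lambda>_. P)" and ?B = "PiM J (\<lambda>_. borel :: real measure)"
  let ?V = "\<lambda>\<omega>. \<lambda>j\<in>J. X j \<omega>"
  have rv: "\<And>j. j \<in> J \<Longrightarrow> random_variable borel (X j)"
    using ind unfolding indep_vars_def by auto
  have sets_Q: "sets ?Q = sets ?B"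
    using P by (intro sets_PiM_cong) auto
  have V: "?V \<in> measurable M ?Q"
    using rv by (subst measurable_cong_sets[OF refl sets_Q]) (rule measurable_restrict)
  have "distr M ?B ?V = PiM J (\<lambda>j. distr M borel (X j))"
    using ind indep_vars_iff_distr_eq_PiM'[OF J, where M'="\<lambda>_. borel" and X=X] rv by auto
  also have "\<dots> = ?Q"
    using distr_X by (intro PiM_cong) auto
  finally have distr_V: "distr M ?Q ?V = ?Q"
    using distr_cong[OF refl sets_Q[symmetric]] by metis
  have gQ: "g \<in> borel_measurable ?Q"
    by (subst measurable_cong_sets[OF sets_Q refl]) (rule g)
  have "{x \<in> space ?Q. g x > \<gamma>} \<in> sets ?Q"
    using gQ by measurable
  then have "prob (?V -` {x \<in> space ?Q. g x > \<gamma>} \<inter> space M) = measure ?Q {x \<in> space ?Q. g x > \<gamma>}"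
    using measure_distr[OF V] distr_V by simp
  also have "?V -` {x \<in> space ?Q. g x > \<gamma>} \<inter> space M = {\<omega> \<in> space M. g (\<lambda>j. X j \<omega>) > \<gamma>}"
    using measurable_space[OF V] g_local[of "?V _" "\<lambda>j. X j _"] by auto
  also have "{x \<in> space ?Q. g x > \<gamma>} = space ?Q - {x \<in> space ?Q. g x \<le> \<gamma>}"
    by auto
  also have "measure ?Q \<dots> = 1 - measure ?Q {x \<in> space ?Q. g x \<le> \<gamma>}"
    using gQ by (intro prob_space.prob_compl prob_space_PiM P(1)) measurable
  finally show ?thesis
    using median by simp
qed

lemma (in prob_space) prob_indep_all_gt_le_power:
  fixes Z :: "'k \<Rightarrow> 'a \<Rightarrow> real"
  assumes ind: "indep_vars (\<lambda>_. borel) Z L" and L: "finite L"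
    and p: "\<And>k. k \<in> L \<Longrightarrow> prob {\<omega> \<in> space M. Z k \<omega> > \<gamma>} \<le> p"
  shows "prob {\<omega> \<in> space M. \<forall>k\<in>L. Z k \<omega> > \<gamma>} \<le> p ^ card L"
proof (cases "L = {}")
  case True
  then show ?thesis by simp
next
  case False
  have "{\<omega> \<in> space M. \<forall>k\<in>L. Z k \<omega> > \<gamma>} = (\<Inter>k\<in>L. Z k -` {\<gamma><..} \<inter> space M)"
    using False by auto
  also have "prob \<dots> = (\<Prod>k\<in>L. prob (Z k -` {\<gamma><..} \<inter> space M))"
    using False L by (intro indep_varsD[OF ind]) auto
  also have "\<dots> \<le> (\<Prod>k\<in>L. p)"
    using p by (intro prod_mono) (auto simp: vimage_def Int_def conj_commute)
  finally show ?thesis by simp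
qed

lemma (in prob_space) prob_iid_passes_all_gt_median:
  fixes X :: "'i \<Rightarrow> 'a \<Rightarrow> real" and g :: "('j \<Rightarrow> real) \<Rightarrow> real"
  assumes ind: "indep_vars (\<lambda>_. borel) X I"
    and inj: "inj_on (\<lambda>(k, j). h k j) (L \<times> J)" and sub: "(\<lambda>(k, j). h k j) ` (L \<times> J) \<subseteq> I"
    and L: "finite L" and J: "J \<noteq> {}"
    and distr_X: "\<And>k j. k \<in> L \<Longrightarrow> j \<in> J \<Longrightarrow> distr M borel (X (h k j)) = P"
    and P: "prob_space P" "sets P = sets borel"
    and g: "g \<in> borel_measurable (PiM J (\<lambda>_. borel))"
    and g_local: "\<And>x y. (\<And>j. j \<in> J \<Longrightarrow> x j = y j) \<Longrightarrow> g x = g y"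
    and median: "measure (PiM J (\<lambda>_. P)) {x \<in> space (PiM J (\<lambda>_. P)). g x \<le> \<gamma>} \<ge> 1/2"
  shows "prob {\<omega> \<in> space M. \<forall>k\<in>L. g (\<lambda>j. X (h k j) \<omega>) > \<gamma>} \<le> (1/2) ^ card L"
proof (rule prob_indep_all_gt_le_power[OF indep_vars_block_stat[OF ind inj sub g g_local] L])
  fix k assume k: "k \<in> L"
  have "inj_on (h k) J" "h k ` J \<subseteq> I"
    using inj sub k by (auto simp: inj_on_def)
  then have "indep_vars (\<lambda>_. borel) (\<lambda>j. X (h k j)) J"
    using indep_vars_reindex[OF ind] by blast
  then show "prob {\<omega> \<in> space M. g (\<lambda>j. X (h k j) \<omega>) > \<gamma>} \<le> 1/2"
    using distr_X k by (intro prob_iid_stat_gt_median_le_half[OF _ J _ P g g_local median]) auto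
qed

lemma surv_eq_survivors_of_all_passes:
  "surv n T \<gamma> k = {i \<in> {1..n}. \<forall>k'\<in>{1..k}. T k' i > \<gamma>}"
  by (induction k) (auto simp: le_Suc_eq)

lemma surv_ne_support:
  assumes "S \<subseteq> {1..n}" and "surv n T \<gamma> K \<noteq> S"
  shows "(\<exists>k\<in>{1..K}. \<exists>i\<in>S. T k i \<le> \<gamma>) \<or> (\<exists>i\<in>{1..n} - S. \<forall>k\<in>{1..K}. T k i > \<gamma>)"
  using assms unfolding surv_eq_survivors_of_all_passes by (auto simp: not_le)

lemma (in prob_space) prob_surv_ne_support_le:
  fixes T :: "nat \<Rightarrow> nat \<Rightarrow> 'a \<Rightarrow> real"
  assumes T: "\<And>k i. T k i \<in> borel_measurable M" and S: "S \<subseteq> {1..n}" and q: "q \<ge> 0"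
    and null: "\<And>i. i \<in> {1..n} - S \<Longrightarrow> prob {\<omega> \<in> space M. \<forall>k\<in>{1..K}. T k i \<omega> > \<gamma>} \<le> q"
  shows "prob {\<omega> \<in> space M. surv n (\<lambda>k i. T k i \<omega>) \<gamma> K \<noteq> S}
           \<le> prob {\<omega> \<in> space M. \<exists>k\<in>{1..K}. \<exists>i\<in>S. T k i \<omega> \<le> \<gamma>} + real n * q"
proof -
  note [measurable] = T
  define Drop where "Drop = {\<omega> \<in> space M. \<exists>k\<in>{1..K}. \<exists>i\<in>S. T k i \<omega> \<le> \<gamma>}"
  define Keep where "Keep i = {\<omega> \<in> space M. \<forall>k\<in>{1..K}. T k i \<omega> > \<gamma>}" for i
  have "finite S" using S finite_subset by blast
  moreover have "Drop = (\<Union>k\<in>{1..K}. \<Union>i\<in>S. {\<omega> \<in> space M. T k i \<omega> \<le> \<gamma>})"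
    unfolding Drop_def by auto
  ultimately have Drop_ev: "Drop \<in> events"
    by (simp add: sets.finite_UN)
  have Keep_ev: "Keep i \<in> events" for i
  proof -
    have "Keep i = space M \<inter> (\<Inter>k\<in>{1..K}. {\<omega> \<in> space M. T k i \<omega> > \<gamma>})"
      unfolding Keep_def by auto
    then show ?thesis
      by (cases "K = 0") (simp_all add: sets.finite_INT)
  qed
  have "{\<omega> \<in> space M. surv n (\<lambda>k i. T k i \<omega>) \<gamma> K \<noteq> S} \<subseteq> Drop \<union> (\<Union>i\<in>{1..n} - S. Keep i)"
  proof
    fix \<omega> assume "\<omega> \<in> {\<omega> \<in> space M. surv n (\<lambda>k i. T k i \<omega>) \<gamma> K \<noteq> S}"
    then have "\<omega> \<in> space M" and "surv n (\<lambda>k i. T k i \<omega>) \<gamma> K \<noteq> S" by auto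
    with surv_ne_support[OF S this(2)] show "\<omega> \<in> Drop \<union> (\<Union>i\<in>{1..n} - S. Keep i)"
      unfolding Drop_def Keep_def by auto
  qed
  then have "prob {\<omega> \<in> space M. surv n (\<lambda>k i. T k i \<omega>) \<gamma> K \<noteq> S}
      \<le> prob (Drop \<union> (\<Union>i\<in>{1..n} - S. Keep i))"
    using Drop_ev Keep_ev by (intro finite_measure_mono) auto
  also have "\<dots> \<le> prob Drop + (\<Sum>i\<in>{1..n} - S. prob (Keep i))"
    using Drop_ev Keep_ev
    by (intro order_trans[OF measure_Un_le] add_left_mono finite_measure_subadditive_finite) auto
  also have "(\<Sum>i\<in>{1..n} - S. prob (Keep i)) \<le> real (card ({1..n} - S)) * q"
    using sum_mono[of "{1..n} - S" "\<lambda>i. prob (Keep i)" "\<lambda>_. q"] null unfolding Keep_def by simp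
  also have "\<dots> \<le> real n * q"
    using q card_mono[of "{1..n}" "{1..n} - S"] by (intro mult_right_mono) auto
  finally show ?thesis unfolding Drop_def by simp
qed

lemma real_mult_half_pow_le_powr:
  fixes n K :: nat
  assumes n: "n > 0" and K: "(1 + \<epsilon>) * log 2 (real n) \<le> real K"
  shows "real n * (1/2) ^ K \<le> real n powr (-\<epsilon>)"
proof -
  have "(1/2 :: real) ^ K = 2 powr (- real K)"
    by (simp add: powr_minus powr_realpow power_one_over inverse_eq_divide)
  also have "\<dots> \<le> 2 powr (- ((1 + \<epsilon>) * log 2 (real n)))"
    using K by (intro powr_mono) auto
  also have "\<dots> = (2 powr log 2 (real n)) powr (- (1 + \<epsilon>))"
    by (simp add: powr_powr algebra_simps)
  also have "\<dots> = real n powr (- 1 - \<epsilon>)"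
    using n by simp
  finally have "real n * (1/2) ^ K \<le> real n * real n powr (- 1 - \<epsilon>)"
    by (simp add: mult_left_mono)
  also have "\<dots> = real n powr (-\<epsilon>)"
    using n by (simp add: powr_add[symmetric] powr_mult_base)
  finally show ?thesis .
qed

lemma LIMSEQ_zero_if_le_plus_n_half_pow:
  fixes e d :: "nat \<Rightarrow> real" and K :: "nat \<Rightarrow> nat"
  assumes le: "\<And>n. n > 0 \<Longrightarrow> e n \<le> d n + real n * (1/2) ^ K n" and nonneg: "\<And>n. e n \<ge> 0"
    and d: "d \<longlonglongrightarrow> 0" and \<epsilon>: "\<epsilon> > 0" and K: "\<And>n. (1 + \<epsilon>) * log 2 (real n) \<le> real (K n)"
  shows "e \<longlonglongrightarrow> 0"
proof (rule tendsto_sandwich[OF _ _ tendsto_const])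
  show "(\<lambda>n. d n + real n powr (-\<epsilon>)) \<longlonglongrightarrow> 0"
    using \<epsilon> by (intro tendsto_add_zero d tendsto_neg_powr filterlim_real_sequentially) auto
  show "\<forall>\<^sub>F n in sequentially. e n \<le> d n + real n powr (-\<epsilon>)"
    using eventually_gt_at_top[of 0]
  proof eventually_elim
    case (elim n)
    show ?case
      using le[OF elim] real_mult_half_pow_le_powr[OF elim K] by linarith
  qed
qed (simp add: nonneg)

lemma measurable_llr_stat:
  assumes "\<And>\<theta>. f \<theta> \<in> borel_measurable borel"
  shows "llr_stat f \<theta>0 \<theta>1 m \<in> borel_measurable (PiM {..<m} (\<lambda>_. borel))"
  using assms unfolding llr_stat_def by measurable

lemma llr_stat_cong:
  "(\<And>j. j < m \<Longrightarrow> x j = y j) \<Longrightarrow> llr_stat f \<theta>0 \<theta>1 m x = llr_stat f \<theta>0 \<theta>1 m y"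
  unfolding llr_stat_def by (intro sum.cong) auto

theorem theorem2:
  fixes f :: "real \<Rightarrow> real \<Rightarrow> real"
    and \<theta>0 \<theta>1 :: "nat \<Rightarrow> real"
    and m :: nat
    and \<epsilon> :: real
    and K :: "nat \<Rightarrow> nat"
    and S :: "nat \<Rightarrow> nat set"
    and \<gamma>0 :: "nat \<Rightarrow> real"
    and M :: "nat \<Rightarrow> 'w measure"
    and Y :: "nat \<Rightarrow> nat \<Rightarrow> nat \<Rightarrow> nat \<Rightarrow> 'w \<Rightarrow> real"
  assumes f_meas: "\<And>\<theta>. f \<theta> \<in> borel_measurable borel"
    and f_nonneg: "\<And>\<theta> y. f \<theta> y \<ge> 0"
    and f_dens: "\<And>\<theta>. prob_space (obs_dist f \<theta>)"
    and theta_ne: "\<And>n. \<theta>0 n \<noteq> \<theta>1 n"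
    and m_pos: "m \<ge> 1"
    and S_sub: "\<And>n. S n \<subseteq> {1..n}"
    and median: "\<And>n. is_median (PiM {..<m} (\<lambda>_. obs_dist f (\<theta>0 n))) (llr_stat f (\<theta>0 n) (\<theta>1 n) m) (\<gamma>0 n)"
    and eps_pos: "\<epsilon> > 0"
    and K_def: "\<And>n. K n = nat \<lceil>(1 + \<epsilon>) * log 2 (real n)\<rceil>"
    and M_prob: "\<And>n. prob_space (M n)"
    and Y_meas: "\<And>n k i j. Y n k i j \<in> borel_measurable (M n)"
    and Y_indep: "\<And>n. prob_space.indep_vars (M n) (\<lambda>_. borel) (\<lambda>(k, i, j). Y n k i j)
                          ({1..K n} \<times> {1..n} \<times> {..<m})"
    and Y_null: "\<And>n k i j. k \<in> {1..K n} \<Longrightarrow> i \<in> {1..n} - S n \<Longrightarrow> j < m \<Longrightarrow>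
                   distr (M n) borel (Y n k i j) = obs_dist f (\<theta>0 n)"
    and Y_sig: "\<And>n k i j. k \<in> {1..K n} \<Longrightarrow> i \<in> S n \<Longrightarrow> j < m \<Longrightarrow>
                   distr (M n) borel (Y n k i j) = obs_dist f (\<theta>1 n)"
    and signal_cond:
      "(\<lambda>n. measure (M n) {\<omega> \<in> space (M n). \<exists>k\<in>{1..K n}. \<exists>i\<in>S n.
              llr_stat f (\<theta>0 n) (\<theta>1 n) m (\<lambda>j. Y n k i j \<omega>) \<le> \<gamma>0 n}) \<longlonglongrightarrow> 0"
  shows "(\<lambda>n. measure (M n) {\<omega> \<in> space (M n).
            surv n (\<lambda>k i. llr_stat f (\<theta>0 n) (\<theta>1 n) m (\<lambda>j. Y n k i j \<omega>)) (\<gamma>0 n) (K n) \<noteq> S n})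
         \<longlonglongrightarrow> 0"
proof -
  define T where "T n k i \<omega> = llr_stat f (\<theta>0 n) (\<theta>1 n) m (\<lambda>j. Y n k i j \<omega>)" for n k i \<omega>
  define Drop where "Drop n = {\<omega> \<in> space (M n). \<exists>k\<in>{1..K n}. \<exists>i\<in>S n. T n k i \<omega> \<le> \<gamma>0 n}" for n
  have error_bound: "measure (M n) {\<omega> \<in> space (M n). surv n (\<lambda>k i. T n k i \<omega>) (\<gamma>0 n) (K n) \<noteq> S n}
      \<le> measure (M n) (Drop n) + real n * (1/2) ^ K n" for n
    unfolding Drop_def
  proof (rule prob_space.prob_surv_ne_support_le[OF M_prob _ S_sub])
    show "T n k i \<in> borel_measurable (M n)" for k i
      using f_meas Y_meas unfolding T_def llr_stat_def by measurable
    fix i assume i: "i \<in> {1..n} - S n"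
    have "measure (M n) {\<omega> \<in> space (M n). \<forall>k\<in>{1..K n}.
        llr_stat f (\<theta>0 n) (\<theta>1 n) m (\<lambda>j. (\<lambda>(k, i, j). Y n k i j) (k, i, j) \<omega>) > \<gamma>0 n}
        \<le> (1/2) ^ card {1..K n}"
      using i m_pos Y_null median[of n] S_sub[of n] unfolding is_median_def
      by (intro prob_space.prob_iid_passes_all_gt_median[OF M_prob Y_indep _ _ _ _ _ f_dens _
            measurable_llr_stat[of f, OF f_meas] llr_stat_cong, where h="\<lambda>k j. (k, i, j)"])
         (auto simp: inj_on_def obs_dist_def lessThan_empty_iff)
    then show "measure (M n) {\<omega> \<in> space (M n). \<forall>k\<in>{1..K n}. T n k i \<omega> > \<gamma>0 n} \<le> (1/2) ^ K n"
      unfolding T_def by simp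
  qed simp
  show ?thesis
    using error_bound eps_pos K_def real_nat_ceiling_ge unfolding Drop_def T_def
    by (intro LIMSEQ_zero_if_le_plus_n_half_pow[OF _ _ signal_cond]) auto
qed

end
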